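(* Let $G=(V,E,w)$ be an instance of TSP, let $V_b$ be the set of bad vertices and $V_g=V\setminus V_b$ the set of good vertices, and assume $\min\{|V_g|,|V_b|\}\ge 3$. Let $o\in V_g$ be any good vertex, let $T_b^*$ be a minimum-weight TSP tour (Hamiltonian cycle) of the induced subgraph $G[V_b\cup\{o\}]$, and let $T_g^*$ be a minimum-weight TSP tour of $G[V_g]$. Then $\mathrm{OPT}\ge w(T_b^* )$ and $\mathrm{OPT}\ge w(T_g^* )$.
   Context: An instance of TSP is a complete graph $G=(V,E,w)$ with a symmetric non-negative edge-weight function $w$ (with $w(a,a)=0$). A TSP tour is a Hamiltonian cycle; its weight $w(\cdot)$ is the sum of its edge weights, and $\mathrm{OPT}$ is the minimum weight of a TSP tour of $G$. A triangle on three distinct vertices $a,b,c$ is violating if the three weights among them violate the triangle inequality (some side exceeds the sum of the other two). A vertex is bad if it belongs to some violating triangle, and good otherwise. *)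

theory Defs
  imports Complex_Main
begin

definition tsp_instance :: "'a set \<Rightarrow> ('a \<Rightarrow> 'a \<Rightarrow> real) \<Rightarrow> bool" where
  "tsp_instance V w \<longleftrightarrow> finite V \<and>
     (\<forall>a\<in>V. \<forall>b\<in>V. w a b = w b a \<and> w a b \<ge> 0) \<and> (\<forall>a\<in>V. w a a = 0)"

text \<open>A Hamiltonian cycle (TSP tour) of the complete graph on S, as a cyclic list
  visiting every vertex of S exactly once.\<close>
definition is_tour :: "'a set \<Rightarrow> 'a list \<Rightarrow> bool" where
  "is_tour S xs \<longleftrightarrow> distinct xs \<and> set xs = S \<and> length xs \<ge> 3"

definition tour_weight :: "('a \<Rightarrow> 'a \<Rightarrow> real) \<Rightarrow> 'a list \<Rightarrow> real" where
  "tour_weight w xs = (\<Sum>i<length xs. w (xs ! i) (xs ! ((i + 1) mod length xs)))"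

definition is_min_tour :: "('a \<Rightarrow> 'a \<Rightarrow> real) \<Rightarrow> 'a set \<Rightarrow> 'a list \<Rightarrow> bool" where
  "is_min_tour w S xs \<longleftrightarrow> is_tour S xs \<and>
     (\<forall>ys. is_tour S ys \<longrightarrow> tour_weight w xs \<le> tour_weight w ys)"

definition OPT :: "'a set \<Rightarrow> ('a \<Rightarrow> 'a \<Rightarrow> real) \<Rightarrow> real" where
  "OPT V w = Min {tour_weight w xs | xs. is_tour V xs}"

definition violating :: "('a \<Rightarrow> 'a \<Rightarrow> real) \<Rightarrow> 'a \<Rightarrow> 'a \<Rightarrow> 'a \<Rightarrow> bool" where
  "violating w a b c \<longleftrightarrow> a \<noteq> b \<and> b \<noteq> c \<and> a \<noteq> c \<and>
     (w a b > w a c + w c b \<or> w b c > w b a + w a c \<or> w a c > w a b + w b c)"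

definition bad_vertices :: "'a set \<Rightarrow> ('a \<Rightarrow> 'a \<Rightarrow> real) \<Rightarrow> 'a set" where
  "bad_vertices V w = {a \<in> V. \<exists>b\<in>V. \<exists>c\<in>V. violating w a b c}"

definition good_vertices :: "'a set \<Rightarrow> ('a \<Rightarrow> 'a \<Rightarrow> real) \<Rightarrow> 'a set" where
  "good_vertices V w = V - bad_vertices V w"

end

theory Submission
  imports Defs
begin

text \<open>Take an optimal tour of the whole instance and shortcut it: deleting a vertex x whose
  cyclic neighbours are p and q replaces w p x + w x q by w p q, which does not increase the
  weight as long as the triangle p x q is not violating, in particular if one of p, x, q is good.
  Deleting the good vertices other than o one at a time (each time x itself is good) leaves a
  tour of the bad vertices and o; deleting bad vertices that follow a good vertex on the cycle
  (then p is good) leaves a tour of the good vertices.\<close>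

fun path_weight :: "('a \<Rightarrow> 'a \<Rightarrow> real) \<Rightarrow> 'a list \<Rightarrow> real" where
  "path_weight w (x # y # zs) = w x y + path_weight w (y # zs)"
| "path_weight w _ = 0"

lemma path_weight_conv_sum:
  "path_weight w xs = (\<Sum>i<length xs - 1. w (xs ! i) (xs ! Suc i))"
proof (induction w xs rule: path_weight.induct)
  case (1 w x y zs)
  have "(\<Sum>i<length (x # y # zs) - 1. w ((x # y # zs) ! i) ((x # y # zs) ! Suc i))
     = w x y + (\<Sum>i<length (y # zs) - 1. w ((y # zs) ! i) ((y # zs) ! Suc i))"
    by (simp add: sum.lessThan_Suc_shift del: sum.lessThan_Suc)
  then show ?case using 1 by simp
qed auto

lemma path_weight_Cons:
  "ys \<noteq> [] \<Longrightarrow> path_weight w (x # ys) = w x (hd ys) + path_weight w ys"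
  by (cases ys) auto

lemma path_weight_snoc:
  "ys \<noteq> [] \<Longrightarrow> path_weight w (ys @ [x]) = path_weight w ys + w (last ys) x"
proof (induction ys)
  case (Cons y ys)
  then show ?case by (cases ys) auto
qed simp

lemma tour_weight_eq_path_weight:
  assumes "xs \<noteq> []"
  shows "tour_weight w xs = path_weight w xs + w (last xs) (hd xs)"
proof -
  obtain m where m: "length xs = Suc m" using assms by (cases xs) auto
  have "tour_weight w xs
      = (\<Sum>i<m. w (xs ! i) (xs ! ((i + 1) mod Suc m))) + w (xs ! m) (xs ! 0)"
    unfolding tour_weight_def m by simp
  also have "(\<Sum>i<m. w (xs ! i) (xs ! ((i + 1) mod Suc m))) = path_weight w xs"
    unfolding path_weight_conv_sum m by (intro sum.cong) auto
  finally show ?thesis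
    using assms m by (simp add: last_conv_nth hd_conv_nth)
qed

lemma tour_weight_rotate1 [simp]: "tour_weight w (rotate1 xs) = tour_weight w xs"
proof (cases xs)
  case (Cons x ys)
  then show ?thesis
    by (cases "ys = []")
      (simp_all add: tour_weight_eq_path_weight path_weight_snoc path_weight_Cons hd_append)
qed simp

lemma tour_weight_rotate [simp]: "tour_weight w (rotate n xs) = tour_weight w xs"
  by (induction n) simp_all

lemma tour_weight_shortcut:
  assumes "zs \<noteq> []" and "w (last zs) (hd zs) \<le> w (last zs) x + w x (hd zs)"
  shows "tour_weight w zs \<le> tour_weight w (x # zs)"
  using assms by (simp add: tour_weight_eq_path_weight path_weight_Cons)

lemma shortcut_tour_to_subset:
  assumes "distinct xs" "K \<subseteq> set xs" "set xs \<subseteq> S"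
    and shortcut: "\<And>ys. distinct ys \<Longrightarrow> K \<subset> set ys \<Longrightarrow> set ys \<subseteq> S \<Longrightarrow>
      \<exists>n x zs. rotate n ys = x # zs \<and> x \<notin> K \<and> zs \<noteq> [] \<and>
        w (last zs) (hd zs) \<le> w (last zs) x + w x (hd zs)"
  shows "\<exists>ys. distinct ys \<and> set ys = K \<and> tour_weight w ys \<le> tour_weight w xs"
  using assms(1-3)
proof (induction xs rule: length_induct)
  case (1 xs)
  show ?case
  proof (cases "K = set xs")
    case False
    then obtain n x zs where rot: "rotate n xs = x # zs" and "x \<notin> K" "zs \<noteq> []"
      and "w (last zs) (hd zs) \<le> w (last zs) x + w x (hd zs)"
      using shortcut "1.prems" by blast
    then have "tour_weight w zs \<le> tour_weight w xs"
      using tour_weight_shortcut tour_weight_rotate by metis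
    moreover have "distinct zs" "length zs < length xs" "K \<subseteq> set zs" "set zs \<subseteq> S"
      using "1.prems" \<open>x \<notin> K\<close> arg_cong[OF rot, of distinct] arg_cong[OF rot, of length]
        arg_cong[OF rot, of set] by auto
    ultimately show ?thesis
      using "1.IH" by (meson order_trans)
  qed (use "1.prems" in auto)
qed

lemma triangle_inequality_at_good_vertex:
  assumes "tsp_instance V w" "a \<in> V" "b \<in> V" "c \<in> V"
    and "g \<in> good_vertices V w" "g \<in> {a, b, c}"
  shows "w a c \<le> w a b + w b c"
proof (cases "a = b \<or> b = c \<or> a = c")
  case True
  then show ?thesis
    using assms(1-4) unfolding tsp_instance_def by (smt (verit))
next
  case False
  have "g \<in> V" "\<forall>b\<in>V. \<forall>c\<in>V. \<not> violating w g b c"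
    using assms(5) unfolding good_vertices_def bad_vertices_def by auto
  then show ?thesis
    using False assms(1-4,6) unfolding tsp_instance_def violating_def
    by (smt (verit) insertE empty_iff)
qed

lemma shortcut_tour_to_superset_of_bad_vertices:
  assumes "tsp_instance V w" "bad_vertices V w \<subseteq> K" "K \<noteq> {}"
    and "distinct xs" "K \<subseteq> set xs" "set xs \<subseteq> V"
  shows "\<exists>ys. distinct ys \<and> set ys = K \<and> tour_weight w ys \<le> tour_weight w xs"
proof (rule shortcut_tour_to_subset[OF assms(4-6)])
  fix ys assume ys: "distinct ys" "K \<subset> set ys" "set ys \<subseteq> V"
  then obtain x where x: "x \<in> set ys" "x \<notin> K" by blast
  then obtain us vs where ys_eq: "ys = us @ x # vs" by (meson split_list)
  have "K \<subseteq> set (vs @ us)" using ys x ys_eq by auto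
  then have ne: "vs @ us \<noteq> []" using assms(3) by auto
  have "x \<in> good_vertices V w"
    using x ys assms(2) unfolding good_vertices_def by auto
  moreover have "x \<in> V" "last (vs @ us) \<in> V" "hd (vs @ us) \<in> V"
    using ys ys_eq last_in_set[OF ne] hd_in_set[OF ne] by auto
  ultimately have "w (last (vs @ us)) (hd (vs @ us))
      \<le> w (last (vs @ us)) x + w x (hd (vs @ us))"
    by (intro triangle_inequality_at_good_vertex[OF assms(1), of _ _ _ x]) simp_all
  moreover have "rotate (length us) ys = x # vs @ us"
    using ys_eq rotate_append[of us "x # vs"] by simp
  ultimately show "\<exists>n x zs. rotate n ys = x # zs \<and> x \<notin> K \<and> zs \<noteq> [] \<and>
      w (last zs) (hd zs) \<le> w (last zs) x + w x (hd zs)"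
    using x(2) ne by blast
qed

lemma shortcut_tour_to_set_of_good_vertices:
  assumes "tsp_instance V w" "K \<subseteq> good_vertices V w" "K \<noteq> {}"
    and "distinct xs" "K \<subseteq> set xs" "set xs \<subseteq> V"
  shows "\<exists>ys. distinct ys \<and> set ys = K \<and> tour_weight w ys \<le> tour_weight w xs"
proof (rule shortcut_tour_to_subset[OF assms(4-6)])
  fix ys assume ys: "distinct ys" "K \<subset> set ys" "set ys \<subseteq> V"
  obtain g where g: "g \<in> K" using assms(3) by blast
  then obtain us vs where ys_eq: "ys = us @ g # vs"
    using ys(2) by (meson psubsetD split_list)
  define r where "r = g # vs @ us"
  have "\<exists>x\<in>set r. x \<notin> K" using ys(2) ys_eq r_def by auto
  then obtain p x q where r_eq: "r = p @ x # q" and x: "x \<notin> K" and p: "\<forall>y\<in>set p. y \<in> K"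
    using split_list_first_prop[of r "\<lambda>x. x \<notin> K"] by blast
  \<comment> \<open>x is the first vertex after g outside K, so its cyclic predecessor last p lies in K\<close>
  have ne: "p \<noteq> []" using r_eq r_def g x by (cases p) auto
  have "rotate (length p + length us) ys = rotate (length p) (rotate (length us) ys)"
    by (simp add: rotate_rotate)
  also have "rotate (length us) ys = p @ x # q"
    using ys_eq r_def r_eq rotate_append[of us "g # vs"] by simp
  finally have "rotate (length p + length us) ys = x # q @ p"
    by (simp add: rotate_append)
  moreover have "last (q @ p) \<in> good_vertices V w"
    using p ne last_in_set[OF ne] assms(2) by auto
  moreover have "x \<in> V" "last (q @ p) \<in> V" "hd (q @ p) \<in> V"
    using arg_cong[OF \<open>rotate (length p + length us) ys = x # q @ p\<close>, of set] ys(3) ne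
      last_in_set[of "q @ p"] hd_in_set[of "q @ p"] by auto
  ultimately have "w (last (q @ p)) (hd (q @ p)) \<le> w (last (q @ p)) x + w x (hd (q @ p))"
    by (intro triangle_inequality_at_good_vertex[OF assms(1), of _ _ _ "last (q @ p)"]) simp_all
  with \<open>rotate (length p + length us) ys = x # q @ p\<close>
  show "\<exists>n x zs. rotate n ys = x # zs \<and> x \<notin> K \<and> zs \<noteq> [] \<and>
      w (last zs) (hd zs) \<le> w (last zs) x + w x (hd zs)"
    using x ne by blast
qed

lemma OPT_attained:
  assumes "finite V" "3 \<le> card V"
  shows "\<exists>T. is_tour V T \<and> OPT V w = tour_weight w T"
proof -
  let ?W = "{tour_weight w xs | xs. is_tour V xs}"
  have "?W \<subseteq> tour_weight w ` {xs. set xs \<subseteq> V \<and> distinct xs}"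
    unfolding is_tour_def by auto
  then have "finite ?W"
    using finite_subset_distinct[OF assms(1)] finite_subset by blast
  moreover obtain T where "set T = V" "distinct T"
    using finite_distinct_list[OF assms(1)] by blast
  then have "?W \<noteq> {}"
    using assms(2) distinct_card unfolding is_tour_def by fastforce
  ultimately show ?thesis
    using Min_in unfolding OPT_def by fastforce
qed

lemma min_tour_weight_le:
  assumes "is_min_tour w K T" "distinct ys" "set ys = K" "3 \<le> card K"
  shows "tour_weight w T \<le> tour_weight w ys"
  using assms distinct_card[OF assms(2)] unfolding is_min_tour_def is_tour_def by auto

theorem lemma1:
  fixes V :: "'a set" and w :: "'a \<Rightarrow> 'a \<Rightarrow> real" and v\<^sub>o :: 'a
    and Tb Tg :: "'a list"
  assumes "tsp_instance V w"
    and "min (card (good_vertices V w)) (card (bad_vertices V w)) \<ge> 3"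
    and "v\<^sub>o \<in> good_vertices V w"
    and "is_min_tour w (bad_vertices V w \<union> {v\<^sub>o}) Tb"
    and "is_min_tour w (good_vertices V w) Tg"
  shows "OPT V w \<ge> tour_weight w Tb \<and> OPT V w \<ge> tour_weight w Tg"
proof -
  let ?B = "bad_vertices V w" and ?G = "good_vertices V w"
  have fin: "finite V" using assms(1) unfolding tsp_instance_def by simp
  have sub: "?B \<subseteq> V" "?G \<subseteq> V" "?B \<union> {v\<^sub>o} \<subseteq> V"
    using assms(3) unfolding good_vertices_def bad_vertices_def by auto
  have card: "3 \<le> card ?G" "3 \<le> card (?B \<union> {v\<^sub>o})" "3 \<le> card V"
    using assms(2) card_mono[OF fin sub(1)]
      card_mono[OF finite_subset[OF sub(3) fin] Un_upper1] by auto
  obtain T where T: "distinct T" "set T = V" "OPT V w = tour_weight w T"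
    using OPT_attained[OF fin card(3)] unfolding is_tour_def by blast
  obtain yb where "distinct yb" "set yb = ?B \<union> {v\<^sub>o}" "tour_weight w yb \<le> OPT V w"
    using shortcut_tour_to_superset_of_bad_vertices[OF assms(1), of "?B \<union> {v\<^sub>o}" T] T sub
    by auto
  then have "tour_weight w Tb \<le> OPT V w"
    using min_tour_weight_le[OF assms(4)] card(2) by fastforce
  moreover obtain yg where "distinct yg" "set yg = ?G" "tour_weight w yg \<le> OPT V w"
    using shortcut_tour_to_set_of_good_vertices[OF assms(1), of ?G T] T sub assms(3) by auto
  then have "tour_weight w Tg \<le> OPT V w"
    using min_tour_weight_le[OF assms(5)] card(1) by fastforce
  ultimately show ?thesis by simp
qed

end
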